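(* Let $T$ be a commutative ring with identity, $S$ a unital subring of $T$ and $I$ a non-zero nil ideal of $T$ such that $T=S+I$ and $S\cap I=\{0\}$. The following are equivalent: (1) $T$ is semi-complemented; (2) $T$ has Property $D$; (3) $S$ has Property $D$ and $I$ is a torsion-free $S$-module.
   Context: All rings are commutative with identity $\neq 0$. $\mathfrak{N}(R)$ is the nilradical and $\mathrm{reg}(R)$ the set of regular elements (non-zero-divisors) of $R$. An element $a$ is complemented if there is $b$ with $ab=0$ and $a+b\in\mathrm{reg}(R)$. $R$ is semi-complemented if every element of $R\setminus\mathfrak{N}(R)$ is complemented. $R$ has Property $D$ if $R\setminus\mathfrak{N}(R)=\mathrm{reg}(R)$. An ideal is nil if it consists of nilpotent elements. An $S$-module $M$ is torsion-free if $rm=0$ with $r\in\mathrm{reg}(S)$, $m\in M$ implies $m=0$. *)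

theory Defs
  imports Main
begin

text \<open>Notions relative to a (sub)ring given as a carrier set A inside a commutative ring 'a.
  For the ambient ring T take A = UNIV.\<close>

definition nilradical_in :: "'a::comm_ring_1 set \<Rightarrow> 'a set" where
  "nilradical_in A = {a \<in> A. \<exists>n::nat. a ^ n = 0}"

definition reg_in :: "'a::comm_ring_1 set \<Rightarrow> 'a set" where
  "reg_in A = {a \<in> A. \<forall>b\<in>A. a * b = 0 \<longrightarrow> b = 0}"

definition complemented_in :: "'a::comm_ring_1 set \<Rightarrow> 'a \<Rightarrow> bool" where
  "complemented_in A a \<longleftrightarrow> (\<exists>b\<in>A. a * b = 0 \<and> a + b \<in> reg_in A)"

definition semi_complemented_in :: "'a::comm_ring_1 set \<Rightarrow> bool" where
  "semi_complemented_in A \<longleftrightarrow> (\<forall>a \<in> A - nilradical_in A. complemented_in A a)"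

definition propD_in :: "'a::comm_ring_1 set \<Rightarrow> bool" where
  "propD_in A \<longleftrightarrow> A - nilradical_in A = reg_in A"

definition unital_subring :: "'a::comm_ring_1 set \<Rightarrow> bool" where
  "unital_subring S \<longleftrightarrow> 1 \<in> S \<and> (\<forall>x\<in>S. \<forall>y\<in>S. x + y \<in> S \<and> x - y \<in> S \<and> x * y \<in> S)"

definition is_ideal :: "'a::comm_ring_1 set \<Rightarrow> bool" where
  "is_ideal I \<longleftrightarrow> 0 \<in> I \<and> (\<forall>x\<in>I. \<forall>y\<in>I. x + y \<in> I) \<and> (\<forall>x\<in>I. \<forall>r. r * x \<in> I)"

definition nil_ideal :: "'a::comm_ring_1 set \<Rightarrow> bool" where
  "nil_ideal I \<longleftrightarrow> is_ideal I \<and> (\<forall>x\<in>I. \<exists>n::nat. x ^ n = 0)"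

definition torsion_free_over :: "'a::comm_ring_1 set \<Rightarrow> 'a set \<Rightarrow> bool" where
  "torsion_free_over S M \<longleftrightarrow> (\<forall>r\<in>reg_in S. \<forall>m\<in>M. r * m = 0 \<longrightarrow> m = 0)"

end

theory Submission
  imports Defs
begin

text \<open>Since \<open>I\<close> is nil, an element \<open>s + i\<close> of \<open>T\<close> (with \<open>s \<in> S\<close>, \<open>i \<in> I\<close>) is nilpotent,
  resp. regular, exactly when \<open>s\<close> is; and for \<open>s \<in> S\<close> the product \<open>s (s' + m)\<close> vanishes iff
  \<open>s s' = 0\<close> and \<open>s m = 0\<close>. So Property D for \<open>T\<close> says that every non-nilpotent \<open>s \<in> S\<close> is
  regular in \<open>S\<close> and has no torsion on \<open>I\<close>, which is (2) \<open>\<Leftrightarrow>\<close> (3).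
  Property D trivially gives semi-complementedness. Conversely, let \<open>T\<close> be semi-complemented
  and \<open>s \<in> S\<close> non-nilpotent. If \<open>n \<in> I\<close> and \<open>s n = 0\<close>, a complement \<open>s' + m\<close> of \<open>s + n\<close> makes
  both \<open>s + s' + m\<close> and \<open>s + s'\<close> regular (they differ from a regular element by a nilpotent),
  and these kill \<open>s' n\<close> and then \<open>n\<close>; so \<open>n = 0\<close>. For a complement \<open>s' + m\<close> of \<open>s\<close> itself,
  \<open>s\<close> and \<open>s'\<close> both annihilate \<open>s' j\<close> for every \<open>j \<in> I\<close>; as \<open>I \<noteq> 0\<close>, this forces \<open>s'\<close> to be
  nilpotent, whence \<open>s = (s + s' + m) - (s' + m)\<close> is regular.\<close>

lemma reg_in_UNIV_iff [simp]: "x \<in> reg_in UNIV \<longleftrightarrow> (\<forall>b. x * b = 0 \<longrightarrow> b = 0)"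
  by (simp add: reg_in_def)

lemma nilradical_in_UNIV_iff [simp]: "x \<in> nilradical_in UNIV \<longleftrightarrow> (\<exists>n. x ^ n = 0)"
  by (simp add: nilradical_in_def)

lemma unital_subring_UNIV: "unital_subring UNIV"
  by (simp add: unital_subring_def)

lemma unital_subring_power:
  assumes "unital_subring A" "a \<in> A"
  shows "a ^ n \<in> A"
  using assms by (induction n) (auto simp: unital_subring_def)

lemma reg_in_power_neq_0:
  assumes A: "unital_subring A" and a: "a \<in> reg_in A"
  shows "a ^ n \<noteq> 0"
proof (induction n)
  case (Suc n)
  have "a ^ n \<in> A"
    using a unital_subring_power[OF A] by (simp add: reg_in_def)
  with Suc a show ?case
    by (auto simp: reg_in_def)
qed simp

lemma propD_in_iff:
  assumes "unital_subring A"
  shows "propD_in A \<longleftrightarrow> (\<forall>a\<in>A. (\<forall>n. a ^ n \<noteq> 0) \<longrightarrow> a \<in> reg_in A)"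
  using reg_in_power_neq_0[OF assms]
  by (auto simp: propD_in_def nilradical_in_def reg_in_def)

lemma propD_in_imp_semi_complemented_in:
  assumes "0 \<in> A" "propD_in A"
  shows "semi_complemented_in A"
  unfolding semi_complemented_in_def complemented_in_def
proof
  fix a assume "a \<in> A - nilradical_in A"
  with assms(2) have "a \<in> reg_in A"
    by (simp add: propD_in_def)
  with assms(1) show "\<exists>b\<in>A. a * b = 0 \<and> a + b \<in> reg_in A"
    by (intro bexI[of _ 0]) simp_all
qed

lemma regular_add_nilpotent:
  fixes x y :: "'a::comm_ring_1"
  assumes x: "x \<in> reg_in UNIV" and y: "y ^ N = 0"
  shows "x + y \<in> reg_in UNIV"
proof (clarsimp)
  fix b assume xyb: "(x + y) * b = 0"
  have "y ^ k * b = 0 \<Longrightarrow> b = 0" for k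
  proof (induction k)
    case (Suc k)
    have "x * (y ^ k * b) = y ^ k * ((x + y) * b) - y ^ Suc k * b"
      by (simp add: algebra_simps)
    with Suc.prems xyb x have "y ^ k * b = 0"
      by simp
    then show ?case
      by (rule Suc.IH)
  qed simp
  from this[of N] y show "b = 0"
    by simp
qed

lemma regular_diff_nilpotent:
  fixes x y :: "'a::comm_ring_1"
  assumes "x \<in> reg_in UNIV" "y ^ N = 0"
  shows "x - y \<in> reg_in UNIV"
proof -
  have "(- y) ^ N = 0"
    using assms(2) by (simp add: power_minus[of y N])
  from regular_add_nilpotent[OF assms(1) this] show ?thesis
    by (simp only: diff_conv_add_uminus)
qed

locale nil_ideal_splitting =
  fixes S I :: "'a::comm_ring_1 set"
  assumes unital_subring: "unital_subring S"
    and nil_ideal: "nil_ideal I"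
    and S_plus_I: "\<forall>t. \<exists>s\<in>S. \<exists>i\<in>I. t = s + i"
    and S_Int_I: "S \<inter> I = {0}"
begin

lemma S_mult: "x \<in> S \<Longrightarrow> y \<in> S \<Longrightarrow> x * y \<in> S"
  using unital_subring by (simp add: unital_subring_def)

lemma zero_in_I: "0 \<in> I"
  using nil_ideal by (simp add: nil_ideal_def is_ideal_def)

lemma I_add: "x \<in> I \<Longrightarrow> y \<in> I \<Longrightarrow> x + y \<in> I"
  using nil_ideal by (simp add: nil_ideal_def is_ideal_def)

lemma I_mult: "x \<in> I \<Longrightarrow> r * x \<in> I"
  using nil_ideal by (simp add: nil_ideal_def is_ideal_def)

lemma I_nilpotent: "x \<in> I \<Longrightarrow> \<exists>n. x ^ n = 0"
  using nil_ideal by (simp add: nil_ideal_def)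

lemma S_part_eq_0:
  assumes "s \<in> S" "i \<in> I" "s + i = 0"
  shows "s = 0"
proof -
  have "s = - i"
    using assms(3) by (simp add: eq_neg_iff_add_eq_0)
  then have "s \<in> I"
    using I_mult[OF assms(2), of "- 1"] by simp
  with assms(1) S_Int_I show ?thesis
    by blast
qed

lemma power_add_diff_in_I:
  assumes "i \<in> I"
  shows "(a + i) ^ n - a ^ n \<in> I"
proof (induction n)
  case 0
  then show ?case using zero_in_I by simp
next
  case (Suc n)
  have "(a + i) ^ Suc n - a ^ Suc n = a ^ n * i + (a + i) * ((a + i) ^ n - a ^ n)"
    by (simp add: algebra_simps)
  with Suc assms show ?case
    by (simp add: I_add I_mult)
qed

lemma nilpotent_add_iff:
  assumes s: "s \<in> S" and i: "i \<in> I"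
  shows "(\<exists>n. (s + i) ^ n = 0) \<longleftrightarrow> (\<exists>n. s ^ n = 0)"
proof
  assume "\<exists>n. (s + i) ^ n = 0"
  then obtain n where "(s + i) ^ n = 0" by blast
  then have "s ^ n + ((s + i) ^ n - s ^ n) = 0" by simp
  then have "s ^ n = 0"
    using S_part_eq_0 unital_subring_power[OF unital_subring s] power_add_diff_in_I[OF i]
    by blast
  then show "\<exists>n. s ^ n = 0" by blast
next
  assume "\<exists>n. s ^ n = 0"
  then obtain n where "s ^ n = 0" by blast
  then have "(s + i) ^ n \<in> I"
    using power_add_diff_in_I[OF i, of s n] by simp
  then obtain k where "((s + i) ^ n) ^ k = 0"
    using I_nilpotent by blast
  then show "\<exists>n. (s + i) ^ n = 0"
    by (metis power_mult)
qed

lemma regular_add_iff: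
  assumes "i \<in> I"
  shows "a + i \<in> reg_in UNIV \<longleftrightarrow> a \<in> reg_in UNIV"
proof -
  obtain N where "i ^ N = 0"
    using I_nilpotent[OF assms] by blast
  show ?thesis
  proof
    assume "a + i \<in> reg_in UNIV"
    from regular_diff_nilpotent[OF this \<open>i ^ N = 0\<close>] show "a \<in> reg_in UNIV"
      by simp
  next
    assume "a \<in> reg_in UNIV"
    from regular_add_nilpotent[OF this \<open>i ^ N = 0\<close>] show "a + i \<in> reg_in UNIV" .
  qed
qed

lemma S_part_mult_eq_0:
  assumes "s1 \<in> S" "i1 \<in> I" "s2 \<in> S" "i2 \<in> I" "(s1 + i1) * (s2 + i2) = 0"
  shows "s1 * s2 = 0"
proof -
  have "s1 * i2 + (s2 + i2) * i1 \<in> I"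
    by (intro I_add I_mult assms(2,4))
  moreover have "s1 * s2 + (s1 * i2 + (s2 + i2) * i1) = 0"
    using assms(5) by (simp add: algebra_simps)
  ultimately show ?thesis
    using S_part_eq_0[OF S_mult[OF assms(1,3)]] by blast
qed

lemma S_regular_iff:
  assumes s: "s \<in> S"
  shows "s \<in> reg_in UNIV \<longleftrightarrow> s \<in> reg_in S \<and> (\<forall>m\<in>I. s * m = 0 \<longrightarrow> m = 0)"
proof (intro iffI)
  assume "s \<in> reg_in UNIV"
  with s show "s \<in> reg_in S \<and> (\<forall>m\<in>I. s * m = 0 \<longrightarrow> m = 0)"
    by (simp add: reg_in_def)
next
  assume reg: "s \<in> reg_in S \<and> (\<forall>m\<in>I. s * m = 0 \<longrightarrow> m = 0)"
  show "s \<in> reg_in UNIV"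
  proof (clarsimp)
    fix b assume sb: "s * b = 0"
    obtain s' m where s': "s' \<in> S" and m: "m \<in> I" and b: "b = s' + m"
      using S_plus_I by blast
    have "s * s' = 0"
      using S_part_mult_eq_0[OF s zero_in_I s' m] sb b by simp
    with reg s' have "s' = 0"
      by (simp add: reg_in_def)
    with reg m sb b show "b = 0"
      by simp
  qed
qed

lemma propD_UNIV_iff:
  "propD_in (UNIV::'a set) \<longleftrightarrow> (\<forall>s\<in>S. (\<forall>n. s ^ n \<noteq> 0) \<longrightarrow> s \<in> reg_in UNIV)"
  unfolding propD_in_iff[OF unital_subring_UNIV]
proof (intro iffI ballI impI)
  fix a :: 'a
  assume S_reg: "\<forall>s\<in>S. (\<forall>n. s ^ n \<noteq> 0) \<longrightarrow> s \<in> reg_in UNIV" and a: "\<forall>n. a ^ n \<noteq> 0"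
  obtain s i where s: "s \<in> S" and i: "i \<in> I" and a_eq: "a = s + i"
    using S_plus_I by blast
  have "\<forall>n. s ^ n \<noteq> 0"
    using a nilpotent_add_iff[OF s i] a_eq by blast
  with S_reg s have "s \<in> reg_in UNIV"
    by blast
  with regular_add_iff[OF i] a_eq show "a \<in> reg_in UNIV"
    by blast
qed blast+

lemma semi_complemented_S_annihilator_I:
  assumes sc: "semi_complemented_in (UNIV::'a set)"
    and s: "s \<in> S" "\<forall>k. s ^ k \<noteq> 0" and n: "n \<in> I" "s * n = 0"
  shows "n = 0"
proof -
  have "\<forall>k. (s + n) ^ k \<noteq> 0"
    using nilpotent_add_iff[OF s(1) n(1)] s(2) by blast
  then have "complemented_in UNIV (s + n)"
    using sc by (simp add: semi_complemented_in_def)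
  then obtain y where y: "(s + n) * y = 0" "s + n + y \<in> reg_in UNIV"
    by (auto simp: complemented_in_def simp del: reg_in_UNIV_iff)
  obtain s' m where s': "s' \<in> S" and m: "m \<in> I" and y_eq: "y = s' + m"
    using S_plus_I by blast
  have ss': "s * s' = 0"
    using S_part_mult_eq_0[OF s(1) n(1) s' m] y(1) y_eq by simp
  have "s' * n * y = s' * ((s + n) * y) - (s * s') * y"
    by (simp add: algebra_simps)
  with y(1) ss' have s'ny: "s' * n * y = 0"
    by simp
  have "s + n + y - n \<in> reg_in UNIV"
    using y(2) I_nilpotent[OF n(1)] regular_diff_nilpotent by blast
  moreover have "(s + n + y - n) * (s' * n) = (s * s') * n + s' * n * y"
    by (simp add: algebra_simps)
  ultimately have s'n: "s' * n = 0"
    using ss' s'ny by simp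
  have "s + n + y - (n + m) \<in> reg_in UNIV"
    using y(2) I_nilpotent[OF I_add[OF n(1) m]] regular_diff_nilpotent by blast
  moreover have "(s + n + y - (n + m)) * n = s * n + s' * n"
    by (simp add: y_eq algebra_simps)
  ultimately show "n = 0"
    using n(2) s'n by simp
qed

lemma semi_complemented_S_regular:
  assumes sc: "semi_complemented_in (UNIV::'a set)" and I_nonzero: "I \<noteq> {0}"
    and s: "s \<in> S" "\<forall>k. s ^ k \<noteq> 0"
  shows "s \<in> reg_in UNIV"
proof -
  have "complemented_in UNIV s"
    using sc s(2) by (simp add: semi_complemented_in_def)
  then obtain y where y: "s * y = 0" "s + y \<in> reg_in UNIV"
    by (auto simp: complemented_in_def simp del: reg_in_UNIV_iff)
  obtain s' m where s': "s' \<in> S" and m: "m \<in> I" and y_eq: "y = s' + m"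
    using S_plus_I by blast
  have ss': "s * s' = 0"
    using S_part_mult_eq_0[OF s(1) zero_in_I s' m] y(1) y_eq by simp
  have "\<exists>k. s' ^ k = 0"
  proof (rule ccontr)
    assume "\<not> (\<exists>k. s' ^ k = 0)"
    then have s'_non_nil: "\<forall>k. s' ^ k \<noteq> 0" by blast
    obtain j where j: "j \<in> I" "j \<noteq> 0"
      using I_nonzero zero_in_I by blast
    have "s * (s' * j) = 0"
      using ss' by (simp add: mult.assoc[symmetric])
    then have "s' * j = 0"
      using semi_complemented_S_annihilator_I[OF sc s] I_mult[OF j(1)] by blast
    then have "j = 0"
      using semi_complemented_S_annihilator_I[OF sc s' s'_non_nil j(1)] by blast
    with j(2) show False ..
  qed
  then obtain N where "y ^ N = 0"
    using nilpotent_add_iff[OF s' m] y_eq by blast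
  then have "s + y - y \<in> reg_in UNIV"
    using y(2) regular_diff_nilpotent by blast
  then show ?thesis
    by simp
qed

lemma semi_complemented_imp_propD:
  assumes "semi_complemented_in (UNIV::'a set)" "I \<noteq> {0}"
  shows "propD_in (UNIV::'a set)"
  using semi_complemented_S_regular[OF assms] by (simp add: propD_UNIV_iff)

lemma propD_iff_propD_S_torsion_free:
  "propD_in (UNIV::'a set) \<longleftrightarrow> propD_in S \<and> torsion_free_over S I"
proof -
  have reg_S_non_nil: "\<forall>n. r ^ n \<noteq> 0" if "r \<in> reg_in S" for r
    using reg_in_power_neq_0[OF unital_subring that] by blast
  have reg_S_sub: "reg_in S \<subseteq> S"
    by (auto simp: reg_in_def)
  show ?thesis
    unfolding propD_UNIV_iff propD_in_iff[OF unital_subring] torsion_free_over_def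
    using S_regular_iff reg_S_non_nil reg_S_sub by blast
qed

end

theorem mainTheorem2:
  fixes S I :: "'a::comm_ring_1 set"
  assumes "unital_subring S"
    and "nil_ideal I" and "I \<noteq> {0}"
    and "\<forall>t. \<exists>s\<in>S. \<exists>i\<in>I. t = s + i"
    and "S \<inter> I = {0}"
  shows "(semi_complemented_in (UNIV::'a set) \<longleftrightarrow> propD_in (UNIV::'a set))
       \<and> (propD_in (UNIV::'a set) \<longleftrightarrow> (propD_in S \<and> torsion_free_over S I))"
proof -
  interpret nil_ideal_splitting S I
    using assms by unfold_locales auto
  have "semi_complemented_in (UNIV::'a set) \<longleftrightarrow> propD_in (UNIV::'a set)"
    using semi_complemented_imp_propD[OF _ \<open>I \<noteq> {0}\<close>]
      propD_in_imp_semi_complemented_in[of UNIV] by blast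
  with propD_iff_propD_S_torsion_free show ?thesis
    by blast
qed

end
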